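(* Let $\kappa$ be a regular cardinal, $A,B$ $\kappa$-additive complete atomic modal algebras and $f:A\to B$ a homomorphism of complete modal algebras. Then the map $F(f):\mathrm{At}(B)\to\mathrm{At}(A)$, $F(f)(b)=f_*(b)$, is a homomorphism of multi-relational Kripke frames from $F(B)$ to $F(A)$.
   Context: A modal algebra is a Boolean algebra $A$ with a unary operation $\Diamond$ satisfying $\Diamond 0=0$ and $\Diamond(x\vee y)=\Diamond x\vee\Diamond y$; it is complete if the Boolean reduct is complete, atomic if every non-zero element is the join of the atoms below it; $\mathrm{At}(A)$ is its set of atoms. It is $\kappa$-additive if $\Diamond\bigvee X=\bigvee_{x\in X}\Diamond x$ for all $X\subseteq A$ with $|X|<\kappa$. A homomorphism of complete modal algebras is a Boolean homomorphism preserving all joins and meets and commuting with $\Diamond$. For such $f:A\to B$, $f_{*}(b)=\bigwedge\{x\in A\mid b\leq f(x)\}$; it maps atoms to atoms. For $X\subseteq A$, $R(X)$ is the relation on $\mathrm{At}(A)$ with $a\,R(X)\,c\iff a\leq\bigwedge\{\Diamond x\mid x\in X,\ c\leq x\}$ (empty meet $=1$), and $F(A)=\langle\mathrm{At}(A),\{R(X)\mid X\subseteq A,|X|<\kappa\}\rangle$. A homomorphism of multi-relational Kripke frames $g:\langle W_1,S_1\rangle\to\langle W_2,S_2\rangle$ is a map $g:W_1\to W_2$ such that: (i) for every $x\in W_1$ and $R_2\in S_2$ there is $R_1\in S_1$ such that for all $y\in W_1$, $xR_1y$ implies $g(x)R_2g(y)$; (ii) for every $x\in W_1$ and $R_1\in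 S_1$ there is $R_2\in S_2$ such that for all $u\in W_2$, if $g(x)R_2u$ then there exists $y\in W_1$ with $xR_1y$ and $g(y)=u$. *)

theory Defs
  imports Main
begin

definition modal_algebra :: "('a::complete_boolean_algebra \<Rightarrow> 'a) \<Rightarrow> bool" where
  "modal_algebra dia \<longleftrightarrow> dia bot = bot \<and> (\<forall>x y. dia (sup x y) = sup (dia x) (dia y))"

definition is_atom :: "'a::complete_boolean_algebra \<Rightarrow> bool" where
  "is_atom a \<longleftrightarrow> a \<noteq> bot \<and> (\<forall>x. x \<le> a \<longrightarrow> x = bot \<or> x = a)"

definition atoms :: "'a::complete_boolean_algebra set" where
  "atoms = {a. is_atom a}"

definition atomic_alg :: "'a::complete_boolean_algebra itself \<Rightarrow> bool" where
  "atomic_alg _ \<longleftrightarrow> (\<forall>x::'a. x \<noteq> bot \<longrightarrow> x = Sup {a \<in> atoms. a \<le> x})"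

definition kappa_additive :: "'k rel \<Rightarrow> ('a::complete_boolean_algebra \<Rightarrow> 'a) \<Rightarrow> bool" where
  "kappa_additive \<kappa> dia \<longleftrightarrow> (\<forall>X::'a set. (card_of X, \<kappa>) \<in> ordLess \<longrightarrow> dia (Sup X) = Sup (dia ` X))"

definition cma_hom ::
  "('a::complete_boolean_algebra \<Rightarrow> 'a) \<Rightarrow> ('b::complete_boolean_algebra \<Rightarrow> 'b) \<Rightarrow> ('a \<Rightarrow> 'b) \<Rightarrow> bool" where
  "cma_hom diaA diaB f \<longleftrightarrow>
     f bot = bot \<and> f top = top \<and>
     (\<forall>x y. f (sup x y) = sup (f x) (f y)) \<and>
     (\<forall>x y. f (inf x y) = inf (f x) (f y)) \<and>
     (\<forall>x. f (- x) = - f x) \<and>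
     (\<forall>X. f (Sup X) = Sup (f ` X)) \<and>
     (\<forall>X. f (Inf X) = Inf (f ` X)) \<and>
     (\<forall>x. f (diaA x) = diaB (f x))"

definition lower_adj :: "('a::complete_boolean_algebra \<Rightarrow> 'b::complete_boolean_algebra) \<Rightarrow> 'b \<Rightarrow> 'a" where
  "lower_adj f b = Inf {x. b \<le> f x}"

definition relR :: "('a::complete_boolean_algebra \<Rightarrow> 'a) \<Rightarrow> 'a set \<Rightarrow> ('a \<times> 'a) set" where
  "relR dia X = {(a, c). a \<in> atoms \<and> c \<in> atoms \<and> a \<le> Inf {dia x | x. x \<in> X \<and> c \<le> x}}"

definition frame_rels :: "'k rel \<Rightarrow> ('a::complete_boolean_algebra \<Rightarrow> 'a) \<Rightarrow> ('a \<times> 'a) set set" where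
  "frame_rels \<kappa> dia = {relR dia X | X. (card_of X, \<kappa>) \<in> ordLess}"

definition frame_hom ::
  "'w set \<Rightarrow> ('w \<times> 'w) set set \<Rightarrow> 'v set \<Rightarrow> ('v \<times> 'v) set set \<Rightarrow> ('w \<Rightarrow> 'v) \<Rightarrow> bool" where
  "frame_hom W1 S1 W2 S2 g \<longleftrightarrow>
     (\<forall>x\<in>W1. g x \<in> W2) \<and>
     (\<forall>x\<in>W1. \<forall>R2\<in>S2. \<exists>R1\<in>S1. \<forall>y\<in>W1. (x, y) \<in> R1 \<longrightarrow> (g x, g y) \<in> R2) \<and>
     (\<forall>x\<in>W1. \<forall>R1\<in>S1. \<exists>R2\<in>S2. \<forall>u\<in>W2. (g x, u) \<in> R2 \<longrightarrow>
        (\<exists>y\<in>W1. (x, y) \<in> R1 \<and> g y = u))"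

end

theory Submission
  imports Defs
begin

text \<open>
  Let \<open>g = f\<^sub>*\<close> be the left adjoint of \<open>f\<close>; it sends atoms to atoms because \<open>f\<close> preserves
  complements. Forth: \<open>b R(f[Y]) d\<close> gives \<open>g b R(Y) g d\<close>, since \<open>g b \<le> \<diamond>y\<close> iff \<open>b \<le> f(\<diamond>y) = \<diamond>(f y)\<close>.
  Back: given \<open>R(X)\<close> and \<open>b\<close>, let \<open>X'\<close> be the \<open>x \<in> X\<close> with \<open>b \<notin> \<diamond>x\<close> and \<open>y\<^sub>0\<close> the largest
  element with \<open>f y\<^sub>0 \<le> \<Squnion>X'\<close>. If \<open>g b R({y\<^sub>0}) u\<close> but no atom \<open>d \<le> f u\<close> satisfies \<open>b R(X) d\<close>,
  then by atomicity \<open>f u \<le> \<Squnion>X'\<close>, so \<open>u \<le> y\<^sub>0\<close> and \<open>b \<le> \<diamond>(f y\<^sub>0) \<le> \<diamond>\<Squnion>X' = \<Squnion>\<diamond>[X']\<close> by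
  \<open>\<kappa>\<close>-additivity; as \<open>b\<close> is an atom it lies below some \<open>\<diamond>x\<close> with \<open>x \<in> X'\<close>, a contradiction.
\<close>

lemma atom_le_compl_if_not_le:
  fixes b :: "'a::complete_boolean_algebra"
  assumes "is_atom b" "\<not> b \<le> x"
  shows "b \<le> - x"
proof -
  have "inf b x = bot \<or> inf b x = b"
    using assms(1) unfolding is_atom_def by simp
  moreover have "inf b x \<noteq> b"
    using assms(2) by (metis inf.absorb_iff1)
  ultimately show ?thesis
    by (simp add: inf_shunt)
qed

lemma atom_le_Sup_iff:
  fixes b :: "'a::complete_boolean_algebra"
  assumes "is_atom b"
  shows "b \<le> Sup S \<longleftrightarrow> (\<exists>s\<in>S. b \<le> s)"
proof
  assume "b \<le> Sup S"
  show "\<exists>s\<in>S. b \<le> s"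
  proof (rule ccontr)
    assume "\<not> (\<exists>s\<in>S. b \<le> s)"
    then have "b \<le> Inf (uminus ` S)"
      using atom_le_compl_if_not_le[OF assms] by (simp add: le_INF_iff)
    then have "b \<le> inf (Sup S) (- Sup S)"
      using \<open>b \<le> Sup S\<close> by (simp add: uminus_Sup)
    then show False
      using assms unfolding is_atom_def by (simp add: bot_unique)
  qed
qed (auto intro: Sup_upper2)

lemma atom_eq_if_nonbot_le:
  fixes u :: "'a::complete_boolean_algebra"
  assumes "is_atom u" "x \<le> u" "x \<noteq> bot"
  shows "x = u"
  using assms unfolding is_atom_def by blast

lemma modal_algebra_mono:
  assumes "modal_algebra dia" "x \<le> y"
  shows "dia x \<le> dia y"
  using assms unfolding modal_algebra_def by (metis sup.absorb2 sup.cobounded1)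

lemma mono_if_Inf_preserving:
  fixes f :: "'a::complete_lattice \<Rightarrow> 'b::complete_lattice"
  assumes "\<forall>X. f (Inf X) = Inf (f ` X)"
  shows "mono f"
proof
  fix x y :: 'a
  assume "x \<le> y"
  then have "f x = inf (f x) (f y)"
    using assms[rule_format, of "{x, y}"] by (simp add: inf.absorb1)
  then show "f x \<le> f y"
    by (metis inf.cobounded2)
qed

lemma lower_adj_le_iff:
  assumes "\<forall>X. f (Inf X) = Inf (f ` X)"
  shows "lower_adj f b \<le> x \<longleftrightarrow> b \<le> f x"
proof
  have "b \<le> f (lower_adj f b)"
    unfolding lower_adj_def assms[rule_format] by (auto intro: Inf_greatest)
  also assume "lower_adj f b \<le> x"
  then have "f (lower_adj f b) \<le> f x"
    by (rule monoD[OF mono_if_Inf_preserving[OF assms]])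
  finally show "b \<le> f x" .
qed (simp add: lower_adj_def Inf_lower)

lemma lower_adj_atom:
  assumes Inf: "\<forall>X. f (Inf X) = Inf (f ` X)" and compl: "\<forall>x. f (- x) = - f x"
    and "is_atom b"
  shows "is_atom (lower_adj f b)"
  unfolding is_atom_def
proof (intro conjI allI impI)
  have "f bot = bot"
    using Inf[rule_format, of "{}"] compl[rule_format, of top] by simp
  then show "lower_adj f b \<noteq> bot"
    using assms(3) lower_adj_le_iff[OF Inf, of b bot] unfolding is_atom_def by (auto simp: bot_unique)
next
  fix x
  assume x: "x \<le> lower_adj f b"
  show "x = bot \<or> x = lower_adj f b"
  proof (cases "b \<le> f x")
    case True
    then show ?thesis
      using x lower_adj_le_iff[OF Inf] by (simp add: order_antisym)
  next
    case False
    then have "lower_adj f b \<le> - x"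
      using atom_le_compl_if_not_le[OF assms(3)] lower_adj_le_iff[OF Inf] compl by simp
    with x have "x \<le> - x"
      by (rule order_trans)
    then show ?thesis
      by (simp flip: inf_shunt)
  qed
qed

lemma lower_adj_eq_if_atom_le:
  assumes Inf: "\<forall>X. f (Inf X) = Inf (f ` X)" and compl: "\<forall>x. f (- x) = - f x"
    and "is_atom d" "is_atom u" "d \<le> f u"
  shows "lower_adj f d = u"
  using atom_eq_if_nonbot_le[OF assms(4)] lower_adj_le_iff[OF Inf] assms(5)
    lower_adj_atom[OF Inf compl assms(3)] unfolding is_atom_def by blast

definition upper_adj :: "('a::complete_lattice \<Rightarrow> 'b::complete_lattice) \<Rightarrow> 'b \<Rightarrow> 'a" where
  "upper_adj f b = Sup {x. f x \<le> b}"

lemma le_upper_adj: "f x \<le> b \<Longrightarrow> x \<le> upper_adj f b"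
  unfolding upper_adj_def by (simp add: Sup_upper)

lemma upper_adj_le:
  assumes "\<forall>X. f (Sup X) = Sup (f ` X)"
  shows "f (upper_adj f b) \<le> b"
  unfolding upper_adj_def assms[rule_format] by (auto intro: Sup_least)

lemma finite_ordLess_infinite_card:
  assumes "Card_order \<kappa>" "\<not> finite (Field \<kappa>)" "finite A"
  shows "(card_of A, \<kappa>) \<in> ordLess"
proof -
  have "Well_order \<kappa>"
    using assms(1) card_order_on_well_order_on by blast
  moreover have "Well_order (card_of A)"
    by (rule card_of_Well_order)
  ultimately show ?thesis
    using finite_ordLess_infinite[of "card_of A" \<kappa>] assms(2,3) by (simp add: Field_card_of)
qed

context
  fixes diaA :: "'a::complete_boolean_algebra \<Rightarrow> 'a"
    and diaB :: "'b::complete_boolean_algebra \<Rightarrow> 'b"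
    and f :: "'a \<Rightarrow> 'b"
  assumes hom: "cma_hom diaA diaB f"
begin

private lemma hom_Inf: "\<forall>X. f (Inf X) = Inf (f ` X)"
  and hom_Sup: "\<forall>X. f (Sup X) = Sup (f ` X)"
  and hom_compl: "\<forall>x. f (- x) = - f x"
  and hom_dia: "\<forall>x. f (diaA x) = diaB (f x)"
  using hom unfolding cma_hom_def by blast+

lemma relR_lower_adj_forth:
  assumes "(b, d) \<in> relR diaB (f ` Y)"
  shows "(lower_adj f b, lower_adj f d) \<in> relR diaA Y"
proof -
  have atoms: "b \<in> atoms" "d \<in> atoms"
    and b_le: "b \<le> Inf {diaB x | x. x \<in> f ` Y \<and> d \<le> x}"
    using assms unfolding relR_def by auto
  have "lower_adj f b \<le> diaA y" if "y \<in> Y" "lower_adj f d \<le> y" for y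
  proof -
    have "d \<le> f y"
      using that(2) lower_adj_le_iff[OF hom_Inf] by blast
    then have "b \<le> diaB (f y)"
      using b_le that(1) by (blast intro: Inf_lower order_trans)
    then show ?thesis
      using lower_adj_le_iff[OF hom_Inf] hom_dia by simp
  qed
  then have "lower_adj f b \<le> Inf {diaA y | y. y \<in> Y \<and> lower_adj f d \<le> y}"
    by (auto intro: Inf_greatest)
  with atoms show ?thesis
    using lower_adj_atom[OF hom_Inf hom_compl] unfolding relR_def atoms_def by simp
qed

lemma image_below_Sup_unrelated:
  assumes "atomic_alg TYPE('b)" "b \<in> atoms" "u \<in> atoms"
    and unrelated: "\<not> (\<exists>d\<in>atoms. (b, d) \<in> relR diaB X \<and> lower_adj f d = u)"
  shows "f u \<le> Sup {x \<in> X. \<not> b \<le> diaB x}"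
proof -
  have "d \<le> Sup {x \<in> X. \<not> b \<le> diaB x}" if d: "d \<in> atoms" "d \<le> f u" for d
  proof -
    have "lower_adj f d = u"
      using lower_adj_eq_if_atom_le[OF hom_Inf hom_compl] d assms(3) unfolding atoms_def by simp
    then have "\<not> b \<le> Inf {diaB x | x. x \<in> X \<and> d \<le> x}"
      using unrelated d assms(2) unfolding relR_def by auto
    then obtain x where "x \<in> X" "d \<le> x" "\<not> b \<le> diaB x"
      by (auto intro: Inf_greatest)
    then show ?thesis
      by (auto intro: Sup_upper2)
  qed
  then have "Sup {d \<in> atoms. d \<le> f u} \<le> Sup {x \<in> X. \<not> b \<le> diaB x}"
    by (auto intro: Sup_least)
  then show ?thesis
    using assms(1) unfolding atomic_alg_def by (cases "f u = bot") auto
qed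

lemma relR_lower_adj_back:
  assumes "modal_algebra diaB" "atomic_alg TYPE('b)" "b \<in> atoms" "u \<in> atoms"
    and additive: "diaB (Sup X') = Sup (diaB ` X')"
    and X': "X' = {x \<in> X. \<not> b \<le> diaB x}"
    and "(lower_adj f b, u) \<in> relR diaA {upper_adj f (Sup X')}"
  shows "\<exists>d\<in>atoms. (b, d) \<in> relR diaB X \<and> lower_adj f d = u"
proof (rule ccontr)
  let ?y\<^sub>0 = "upper_adj f (Sup X')"
  assume "\<not> (\<exists>d\<in>atoms. (b, d) \<in> relR diaB X \<and> lower_adj f d = u)"
  then have "u \<le> ?y\<^sub>0"
    using image_below_Sup_unrelated assms(2-4) X' by (blast intro: le_upper_adj)
  then have "lower_adj f b \<le> diaA ?y\<^sub>0"
    using assms(7) unfolding relR_def by (auto intro: Inf_lower2)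
  then have "b \<le> diaB (f ?y\<^sub>0)"
    using lower_adj_le_iff[OF hom_Inf] hom_dia by simp
  also have "\<dots> \<le> diaB (Sup X')"
    using modal_algebra_mono[OF assms(1)] upper_adj_le[OF hom_Sup] .
  finally obtain x where "x \<in> X'" "b \<le> diaB x"
    using atom_le_Sup_iff[of b] assms(3) additive unfolding atoms_def by auto
  then show False
    using X' by blast
qed

lemma frame_hom_forth:
  assumes "b \<in> atoms" "R\<^sub>A \<in> frame_rels \<kappa> diaA"
  shows "\<exists>R\<^sub>B\<in>frame_rels \<kappa> diaB. \<forall>d\<in>atoms. (b, d) \<in> R\<^sub>B \<longrightarrow> (lower_adj f b, lower_adj f d) \<in> R\<^sub>A"
proof -
  obtain Y where Y: "R\<^sub>A = relR diaA Y" "(card_of Y, \<kappa>) \<in> ordLess"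
    using assms(2) unfolding frame_rels_def by blast
  then have "(card_of (f ` Y), \<kappa>) \<in> ordLess"
    using card_of_image ordLeq_ordLess_trans by blast
  then have "relR diaB (f ` Y) \<in> frame_rels \<kappa> diaB"
    unfolding frame_rels_def by blast
  then show ?thesis
    using relR_lower_adj_forth Y(1) by blast
qed

lemma frame_hom_back:
  assumes "Card_order \<kappa>" "\<not> finite (Field \<kappa>)"
    and "modal_algebra diaB" "atomic_alg TYPE('b)" "kappa_additive \<kappa> diaB"
    and "b \<in> atoms" "R\<^sub>B \<in> frame_rels \<kappa> diaB"
  shows "\<exists>R\<^sub>A\<in>frame_rels \<kappa> diaA. \<forall>u\<in>atoms. (lower_adj f b, u) \<in> R\<^sub>A \<longrightarrow>
           (\<exists>d\<in>atoms. (b, d) \<in> R\<^sub>B \<and> lower_adj f d = u)"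
proof -
  obtain X where X: "R\<^sub>B = relR diaB X" "(card_of X, \<kappa>) \<in> ordLess"
    using assms(7) unfolding frame_rels_def by blast
  define X' where "X' = {x \<in> X. \<not> b \<le> diaB x}"
  have "(card_of X', \<kappa>) \<in> ordLess"
    using card_of_mono1[of X' X] X(2) ordLeq_ordLess_trans unfolding X'_def by blast
  then have additive: "diaB (Sup X') = Sup (diaB ` X')"
    using assms(5) unfolding kappa_additive_def by blast
  have "relR diaA {upper_adj f (Sup X')} \<in> frame_rels \<kappa> diaA"
    using finite_ordLess_infinite_card[OF assms(1,2)] unfolding frame_rels_def by blast
  then show ?thesis
  proof (rule bexI[rotated], intro ballI impI)
    fix u :: 'a
    assume "u \<in> atoms" "(lower_adj f b, u) \<in> relR diaA {upper_adj f (Sup X')}"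
    then show "\<exists>d\<in>atoms. (b, d) \<in> R\<^sub>B \<and> lower_adj f d = u"
      using relR_lower_adj_back[OF assms(3,4,6) _ additive X'_def] X(1) by simp
  qed
qed

end

theorem proposition7p5:
  fixes \<kappa> :: "'k rel"
    and diaA :: "'a::complete_boolean_algebra \<Rightarrow> 'a"
    and diaB :: "'b::complete_boolean_algebra \<Rightarrow> 'b"
    and f :: "'a \<Rightarrow> 'b"
  assumes "Card_order \<kappa>" and "\<not> finite (Field \<kappa>)" and "regularCard \<kappa>"
    and "modal_algebra diaA" and "modal_algebra diaB"
    and "atomic_alg TYPE('a)" and "atomic_alg TYPE('b)"
    and "kappa_additive \<kappa> diaA" and "kappa_additive \<kappa> diaB"
    and "cma_hom diaA diaB f"
  shows "frame_hom (atoms :: 'b set) (frame_rels \<kappa> diaB) (atoms :: 'a set) (frame_rels \<kappa> diaA)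
           (lower_adj f)"
proof -
  have "\<forall>X. f (Inf X) = Inf (f ` X)" "\<forall>x. f (- x) = - f x"
    using assms(10) unfolding cma_hom_def by blast+
  then have maps_atoms: "lower_adj f b \<in> atoms" if "b \<in> atoms" for b
    using lower_adj_atom that unfolding atoms_def by blast
  show ?thesis
    unfolding frame_hom_def
    by (intro conjI ballI maps_atoms frame_hom_forth[OF assms(10)] frame_hom_back[OF assms(10,1,2,5,7,9)])
qed

end
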